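(* Let $R$ be a commutative ring with ${\rm char}(R)\neq 2$ and $R_2\neq\{0\}$. Let $G$ be a non-abelian group and $\varphi$ an involution on $G$. Then $(RG)^-_\varphi$ is commutative if and only if one of the following holds: \begin{enumerate} \item[(a)] $K=\langle g\in G\mid g\notin G_\varphi\rangle$ is abelian (and thus $G=K\cup Kx$ with $x\in G_\varphi$ and $\varphi(k)=xkx^{-1}$ for all $k\in K$), and $R_2^2=\{0\}$; \item[(b)] ${\rm char}(R)=4$, $|G'|=2$, $G/G'=(G/G')_\varphi$, $g^2\in G_\varphi$ for all $g\in G$, and $G_\varphi$ is commutative in case $R_2^2\neq\{0\}$. \end{enumerate}
   Context: An involution on a group $G$ is a map $\varphi:G\to G$ with $\varphi(gh)=\varphi(h)\varphi(g)$ and $\varphi^2=\mathrm{id}$, extended $R$-linearly to $RG$. $G_\varphi=\{g\in G\mid\varphi(g)=g\}$; $(RG)^-_\varphi=\{\alpha\in RG\mid\varphi(\alpha)=-\alpha\}$; $R_2=\{r\in R\mid 2r=0\}$; $R_2^2=\{0\}$ means $r_1r_2=0$ for all $r_1,r_2\in R_2$. $G'$ is the commutator subgroup; $G/G'=(G/G')_\varphi$ means $\varphi(g)G'=gG'$ for all $g\in G$. "$G_\varphi$ is commutative" means any two elements of $G_\varphi$ commute. *)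

theory Defs
  imports "HOL-Algebra.Algebra"
begin

definition grp_involution :: "('g, 'b) monoid_scheme \<Rightarrow> ('g \<Rightarrow> 'g) \<Rightarrow> bool" where
  "grp_involution G \<phi> \<longleftrightarrow>
     \<phi> \<in> carrier G \<rightarrow> carrier G \<and>
     (\<forall>g\<in>carrier G. \<forall>h\<in>carrier G. \<phi> (g \<otimes>\<^bsub>G\<^esub> h) = \<phi> h \<otimes>\<^bsub>G\<^esub> \<phi> g) \<and>
     (\<forall>g\<in>carrier G. \<phi> (\<phi> g) = g)"

definition fixed_set :: "('g, 'b) monoid_scheme \<Rightarrow> ('g \<Rightarrow> 'g) \<Rightarrow> 'g set" where
  "fixed_set G \<phi> = {g \<in> carrier G. \<phi> g = g}"

definition grp_ring :: "('g, 'b) monoid_scheme \<Rightarrow> ('g \<Rightarrow> 'r::comm_ring_1) set" where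
  "grp_ring G = {\<alpha>. finite {g. \<alpha> g \<noteq> 0} \<and> (\<forall>g. \<alpha> g \<noteq> 0 \<longrightarrow> g \<in> carrier G)}"

definition grp_ring_mult :: "('g, 'b) monoid_scheme \<Rightarrow> ('g \<Rightarrow> 'r::comm_ring_1) \<Rightarrow> ('g \<Rightarrow> 'r) \<Rightarrow> ('g \<Rightarrow> 'r)" where
  "grp_ring_mult G \<alpha> \<beta> = (\<lambda>g. if g \<in> carrier G
      then (\<Sum>h \<in> {h. \<alpha> h \<noteq> 0}. \<alpha> h * \<beta> (inv\<^bsub>G\<^esub> h \<otimes>\<^bsub>G\<^esub> g)) else 0)"

text \<open>R-linear extension of phi to RG: phi(sum a_g g) = sum a_g phi(g); since phi is
  an involution, the coefficient at g is a_(phi g).\<close>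
definition grp_ring_inv :: "('g, 'b) monoid_scheme \<Rightarrow> ('g \<Rightarrow> 'g) \<Rightarrow> ('g \<Rightarrow> 'r::comm_ring_1) \<Rightarrow> ('g \<Rightarrow> 'r)" where
  "grp_ring_inv G \<phi> \<alpha> = (\<lambda>g. if g \<in> carrier G then \<alpha> (\<phi> g) else 0)"

definition skew_elems :: "('g, 'b) monoid_scheme \<Rightarrow> ('g \<Rightarrow> 'g) \<Rightarrow> ('g \<Rightarrow> 'r::comm_ring_1) set" where
  "skew_elems G \<phi> = {\<alpha> \<in> grp_ring G. grp_ring_inv G \<phi> \<alpha> = - \<alpha>}"

definition R2 :: "'r::comm_ring_1 set" where
  "R2 = {r. 2 * r = 0}"

end

theory Submission
  imports Defs "HOL-Library.Function_Algebras"
begin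

text \<open>
  Write \<open>moved\<close> for the group elements not fixed by the involution \<open>\<phi>\<close> and \<open>fixed\<close> for
  \<open>G\<^sub>\<phi>\<close>.  Every skew element is a finite sum of generators \<open>r(g - \<phi>(g))\<close> with \<open>g\<close> moved
  and \<open>s x\<close> with \<open>x\<close> fixed and \<open>2s = 0\<close>, so \<open>(RG)\<^sup>-\<^sub>\<phi>\<close> is commutative iff these generators
  commute pairwise.  Scalars on the first kind factor out, leaving three families of
  commutation conditions: two moved elements, a fixed and a moved element, two fixed ones.

  If the moved elements commute, they generate an abelian subgroup,
  and \<open>R\<^sub>2\<^sup>2 = 0\<close> since otherwise \<open>G\<close> would be abelian: this is case (a).  Otherwise the
  relations force \<open>char R = 4\<close> and place us in the locale \<open>twisted_involution\<close>, where
  \<open>c = \<phi>(g\<^sub>0) g\<^sub>0\<^sup>-\<^sup>1\<close> is a central involution with \<open>\<phi>(g) = c g\<close> on moved elements and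
  \<open>G' = {1, c}\<close>: this is case (b).  Conversely each of (a) and (b) makes the three families
  commute, and the theorem follows by combining the two directions.
\<close>

section \<open>Arithmetic in the group ring\<close>

definition single_elem :: "'g \<Rightarrow> 'r::comm_ring_1 \<Rightarrow> 'g \<Rightarrow> 'r" where
  "single_elem g r = (\<lambda>z. if z = g then r else 0)"

lemma single_elem_grp_ring: "g \<in> carrier G \<Longrightarrow> single_elem g r \<in> grp_ring G"
  unfolding grp_ring_def single_elem_def by (auto intro: finite_subset[of _ "{g}"])

lemma grp_ring_zero: "0 \<in> grp_ring G"
  unfolding grp_ring_def by simp

lemma grp_ring_pointwise:
  assumes "\<alpha> \<in> grp_ring G" "\<beta> \<in> grp_ring G" and "f 0 0 = 0"
  shows "(\<lambda>z. f (\<alpha> z) (\<beta> z)) \<in> grp_ring G"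
proof -
  have "{z. f (\<alpha> z) (\<beta> z) \<noteq> 0} \<subseteq> {z. \<alpha> z \<noteq> 0} \<union> {z. \<beta> z \<noteq> 0}"
    using assms(3) by auto
  then show ?thesis
    using assms(1,2) unfolding grp_ring_def by (auto intro: finite_subset)
qed

lemma grp_ring_add: "\<alpha> \<in> grp_ring G \<Longrightarrow> \<beta> \<in> grp_ring G \<Longrightarrow> \<alpha> + \<beta> \<in> grp_ring G"
  using grp_ring_pointwise[of \<alpha> G \<beta> "(+)"] by (simp add: plus_fun_def)

lemma grp_ring_diff: "\<alpha> \<in> grp_ring G \<Longrightarrow> \<beta> \<in> grp_ring G \<Longrightarrow> \<alpha> - \<beta> \<in> grp_ring G"
  using grp_ring_pointwise[of \<alpha> G \<beta> "(-)"] by (simp add: fun_diff_def)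

lemma grp_ring_mult_supp:
  assumes "finite F" "{h. \<alpha> h \<noteq> 0} \<subseteq> F"
  shows "grp_ring_mult G \<alpha> \<beta>
    = (\<lambda>g. if g \<in> carrier G then \<Sum>h\<in>F. \<alpha> h * \<beta> (inv\<^bsub>G\<^esub> h \<otimes>\<^bsub>G\<^esub> g) else 0)"
  unfolding grp_ring_mult_def
  by (intro ext if_cong refl sum.mono_neutral_left assms) auto

lemma grp_ring_mult_add_left:
  assumes "\<alpha> \<in> grp_ring G" "\<beta> \<in> grp_ring G"
  shows "grp_ring_mult G (\<alpha> + \<beta>) \<gamma> = grp_ring_mult G \<alpha> \<gamma> + grp_ring_mult G \<beta> \<gamma>"
proof -
  let ?F = "{h. \<alpha> h \<noteq> 0} \<union> {h. \<beta> h \<noteq> 0}"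
  have fin: "finite ?F" using assms unfolding grp_ring_def by auto
  show ?thesis
    by (subst (1 2 3) grp_ring_mult_supp[OF fin])
      (auto simp: fun_eq_iff sum.distrib distrib_right)
qed

lemma grp_ring_mult_add_right:
  "grp_ring_mult G \<alpha> (\<beta> + \<gamma>) = grp_ring_mult G \<alpha> \<beta> + grp_ring_mult G \<alpha> \<gamma>"
  unfolding grp_ring_mult_def by (simp add: fun_eq_iff sum.distrib distrib_left)

lemma grp_ring_mult_zero [simp]:
  "grp_ring_mult G 0 \<beta> = 0" "grp_ring_mult G \<alpha> 0 = 0"
  unfolding grp_ring_mult_def by (simp_all add: fun_eq_iff)

lemma (in group) grp_ring_mult_single:
  assumes "a \<in> carrier G" "b \<in> carrier G"
  shows "grp_ring_mult G (single_elem a r) (single_elem b s) = single_elem (a \<otimes> b) (r * s)"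
proof -
  have "grp_ring_mult G (single_elem a r) (single_elem b s)
      = (\<lambda>g. if g \<in> carrier G then \<Sum>h\<in>{a}. single_elem a r h * single_elem b s (inv h \<otimes> g) else 0)"
    by (rule grp_ring_mult_supp) (auto simp: single_elem_def)
  moreover have "inv a \<otimes> g = b \<longleftrightarrow> g = a \<otimes> b" if "g \<in> carrier G" for g
    using assms that inv_solve_left[of b a g] by auto
  ultimately show ?thesis
    using assms by (auto simp: fun_eq_iff single_elem_def)
qed

inductive in_add_span :: "'a::ab_group_add set \<Rightarrow> 'a \<Rightarrow> bool" for A where
  add_span_zero: "in_add_span A 0"
| add_span_add: "a \<in> A \<Longrightarrow> in_add_span A b \<Longrightarrow> in_add_span A (a + b)"

lemma add_span_grp_ring:
  assumes "A \<subseteq> grp_ring G" "in_add_span A \<beta>"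
  shows "\<beta> \<in> grp_ring G"
  using assms(2)
proof induction
  case add_span_zero
  show ?case by (rule grp_ring_zero)
next
  case (add_span_add a b)
  then show ?case using assms(1) by (intro grp_ring_add) auto
qed

lemma add_span_commute_elem:
  assumes A: "A \<subseteq> grp_ring G"
    and comm: "\<And>a. a \<in> A \<Longrightarrow> grp_ring_mult G \<gamma> a = grp_ring_mult G a \<gamma>"
    and \<beta>: "in_add_span A \<beta>"
  shows "grp_ring_mult G \<gamma> \<beta> = grp_ring_mult G \<beta> \<gamma>"
  using \<beta>
proof induction
  case add_span_zero
  show ?case by (simp only: grp_ring_mult_zero)
next
  case (add_span_add a b)
  have "a \<in> grp_ring G" "b \<in> grp_ring G"
    using A add_span_add.hyps(1) add_span_grp_ring[OF A add_span_add.hyps(2)] by auto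
  then show ?case
    unfolding grp_ring_mult_add_right grp_ring_mult_add_left[OF \<open>a \<in> grp_ring G\<close> \<open>b \<in> grp_ring G\<close>]
    using add_span_add comm by (simp only:)
qed

lemma add_span_commute:
  assumes A: "A \<subseteq> grp_ring G"
    and comm: "\<And>a b. a \<in> A \<Longrightarrow> b \<in> A \<Longrightarrow> grp_ring_mult G a b = grp_ring_mult G b a"
    and "in_add_span A \<alpha>" "in_add_span A \<beta>"
  shows "grp_ring_mult G \<alpha> \<beta> = grp_ring_mult G \<beta> \<alpha>"
proof -
  have "grp_ring_mult G a \<beta> = grp_ring_mult G \<beta> a" if "a \<in> A" for a
    using add_span_commute_elem[OF A comm[OF that] assms(4)] by simp
  then show ?thesis
    using add_span_commute_elem[OF A _ assms(3), of \<beta>] by simp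
qed

section \<open>Scalars\<close>

lemma R2_iff: "(s::'r::comm_ring_1) \<in> R2 \<longleftrightarrow> s = - s"
  unfolding R2_def mult_2 eq_neg_iff_add_eq_0 by simp

lemma R2_swap:
  assumes "(s::'r::comm_ring_1) \<in> R2" shows "s * (a - b) = s * (b - a)"
proof -
  have neg: "- s = s" using assms unfolding R2_iff by (rule sym)
  have "s * (a - b) = (- s) * (b - a)" by (simp add: algebra_simps)
  then show ?thesis unfolding neg .
qed

lemma two_nonzero:
  assumes "CHAR('r::comm_ring_1) \<noteq> 2" shows "(2::'r) \<noteq> 0"
proof
  assume two: "(2::'r) = 0"
  have "CHAR('r) = 2"
  proof (rule CHAR_eq_posI)
    fix x :: nat assume "0 < x" "x < 2"
    then show "of_nat x \<noteq> (0::'r)" by (simp add: \<open>x < 2\<close> less_2_cases_iff)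
  qed (use two in auto)
  with assms show False by simp
qed

text \<open>A nonzero \<open>s \<in> R\<^sub>2\<close> satisfies \<open>3s = s \<noteq> 0\<close>, so \<open>3 \<noteq> 0\<close>.\<close>

lemma three_nonzero:
  assumes "(R2::'r::comm_ring_1 set) \<noteq> {0}" shows "(3::'r) \<noteq> 0"
proof
  assume three: "(3::'r) = 0"
  obtain s :: 'r where s: "s \<in> R2" "s \<noteq> 0"
    using assms by (auto simp: R2_def)
  have "s = 3 * s - 2 * s" by (simp add: algebra_simps)
  also have "\<dots> = 0" using three s(1) by (simp add: R2_def)
  finally show False using s(2) by simp
qed

lemma CHAR_eq_4:
  assumes "(2::'r::comm_ring_1) \<noteq> 0" "(3::'r) \<noteq> 0" "(4::'r) = 0"
  shows "CHAR('r) = 4"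
proof (rule CHAR_eq_posI)
  fix x :: nat assume "0 < x" "x < 4"
  then have "x = 1 \<or> x = 2 \<or> x = 3" by auto
  then show "of_nat x \<noteq> (0::'r)" using assms by auto
qed (use assms in auto)

lemma four_swap: "(4::'r::comm_ring_1) = 0 \<Longrightarrow> a - b - b + a = (b - a - a + b :: 'r)"
proof -
  assume four: "(4::'r) = 0"
  have "(a - b - b + a) - (b - a - a + b) = 4 * (a - b)" by (simp add: algebra_simps)
  then show ?thesis using four by simp
qed

text \<open>Counting argument used for two non-commuting moved elements: if \<open>2, 3 \<noteq> 0\<close>, a sum
  \<open>1 + b\<^sub>1 + b\<^sub>2 + b\<^sub>3 - b\<^sub>4\<close> of truth values vanishes only in the two listed ways.\<close>

lemma of_bool_sum_zero:
  assumes "(1::'r::comm_ring_1) + of_bool b1 + of_bool b2 + of_bool b3 - of_bool b4 = 0"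
    and "(2::'r) \<noteq> 0" "(3::'r) \<noteq> 0"
  shows "(b1 \<and> b2 \<and> b3 \<and> \<not> b4 \<and> (4::'r) = 0) \<or> (\<not> b1 \<and> \<not> b2 \<and> \<not> b3 \<and> b4)"
  using assms by (cases b1; cases b2; cases b3; cases b4) (simp_all add: algebra_simps)

section \<open>Group theory: commuting up to a central involution\<close>

context group
begin

lemma inv_cancel_left [simp]:
  "x \<in> carrier G \<Longrightarrow> y \<in> carrier G \<Longrightarrow> x \<otimes> (inv x \<otimes> y) = y"
  "x \<in> carrier G \<Longrightarrow> y \<in> carrier G \<Longrightarrow> inv x \<otimes> (x \<otimes> y) = y"
  by (simp_all add: m_assoc[symmetric])

lemma commute_mult:
  assumes "y \<in> carrier G" "a \<in> carrier G" "b \<in> carrier G" "y \<otimes> a = a \<otimes> y" "y \<otimes> b = b \<otimes> y"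
  shows "y \<otimes> (a \<otimes> b) = (a \<otimes> b) \<otimes> y"
  using assms by (metis m_assoc)

lemma commute_inv:
  assumes "y \<in> carrier G" "a \<in> carrier G" "y \<otimes> a = a \<otimes> y"
  shows "y \<otimes> inv a = inv a \<otimes> y"
  using assms by (metis inv_solve_left inv_solve_right m_assoc m_closed inv_closed)

lemma commute_generate:
  assumes A: "A \<subseteq> carrier G" and y: "y \<in> carrier G"
    and comm: "\<And>a. a \<in> A \<Longrightarrow> y \<otimes> a = a \<otimes> y" and b: "b \<in> generate G A"
  shows "y \<otimes> b = b \<otimes> y"
  using b
proof induction
  case one
  show ?case using y by simp
next
  case (incl h)
  then show ?case by (rule comm)
next
  case (inv h)
  then show ?case using A y comm commute_inv by blast
next
  case (eng h1 h2)
  then show ?case using generate_incl[OF A] y commute_mult by blast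
qed

lemma generate_commute:
  assumes A: "A \<subseteq> carrier G" and comm: "\<And>a b. a \<in> A \<Longrightarrow> b \<in> A \<Longrightarrow> a \<otimes> b = b \<otimes> a"
    and "a \<in> generate G A" "b \<in> generate G A"
  shows "a \<otimes> b = b \<otimes> a"
proof -
  have b: "b \<in> carrier G" using generate_incl[OF A] assms(4) by blast
  have "b \<otimes> a' = a' \<otimes> b" if "a' \<in> A" for a'
    using commute_generate[OF A _ comm[OF that] assms(4)] A that by auto
  then show ?thesis
    using commute_generate[OF A b _ assms(3)] by simp
qed

lemma mult_notin_subgroup:
  assumes H: "subgroup H G" and x: "x \<in> carrier G" "x \<notin> H" and k: "k \<in> H"
  shows "x \<otimes> k \<notin> H"
proof
  assume "x \<otimes> k \<in> H"
  then have "(x \<otimes> k) \<otimes> inv k \<in> H"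
    using k by (simp add: subgroup.m_closed[OF H] subgroup.m_inv_closed[OF H])
  then show False
    using x k subgroup.mem_carrier[OF H k] by (simp add: m_assoc)
qed

definition commute_up_to :: "'a \<Rightarrow> 'a \<Rightarrow> 'a \<Rightarrow> bool" where
  "commute_up_to c a b \<longleftrightarrow> a \<otimes> b = b \<otimes> a \<or> a \<otimes> b = c \<otimes> (b \<otimes> a)"

lemma commute_up_to_iff:
  "commute_up_to c a b \<longleftrightarrow> (\<exists>e\<in>{\<one>, c}. a \<otimes> b = e \<otimes> (b \<otimes> a))"
  if "a \<in> carrier G" "b \<in> carrier G"
  using that unfolding commute_up_to_def by auto

lemma commute_up_to_mult:
  assumes c: "c \<in> carrier G" "c \<otimes> c = \<one>" and central: "\<And>u. u \<in> carrier G \<Longrightarrow> c \<otimes> u = u \<otimes> c"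
    and auv: "a \<in> carrier G" "u \<in> carrier G" "v \<in> carrier G"
    and up_to_u: "commute_up_to c a u" and up_to_v: "commute_up_to c a v"
  shows "commute_up_to c a (u \<otimes> v)"
proof -
  have "\<exists>e\<in>{\<one>, c}. a \<otimes> u = e \<otimes> (u \<otimes> a)"
    using up_to_u unfolding commute_up_to_iff[OF auv(1,2)] .
  then obtain e1 where e1: "e1 \<in> {\<one>, c}" "a \<otimes> u = e1 \<otimes> (u \<otimes> a)" ..
  have "\<exists>e\<in>{\<one>, c}. a \<otimes> v = e \<otimes> (v \<otimes> a)"
    using up_to_v unfolding commute_up_to_iff[OF auv(1,3)] .
  then obtain e2 where e2: "e2 \<in> {\<one>, c}" "a \<otimes> v = e2 \<otimes> (v \<otimes> a)" ..
  have e12: "e1 \<in> carrier G" "e2 \<in> carrier G" "e1 \<otimes> e2 \<in> {\<one>, c}"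
    using e1(1) e2(1) c by auto
  have ue2: "u \<otimes> e2 = e2 \<otimes> u" using e2(1) central auv by auto
  have "a \<otimes> (u \<otimes> v) = (a \<otimes> u) \<otimes> v"
    using auv by (simp add: m_assoc)
  also have "\<dots> = e1 \<otimes> (u \<otimes> (a \<otimes> v))"
    unfolding e1(2) using auv e12 by (simp add: m_assoc)
  also have "\<dots> = e1 \<otimes> ((e2 \<otimes> u) \<otimes> (v \<otimes> a))"
    unfolding e2(2) ue2[symmetric] using auv e12 by (simp add: m_assoc)
  also have "\<dots> = (e1 \<otimes> e2) \<otimes> ((u \<otimes> v) \<otimes> a)"
    using auv e12 by (simp add: m_assoc)
  finally show ?thesis
    unfolding commute_up_to_iff[OF auv(1) m_closed[OF auv(2,3)]] using e12(3) by (rule bexI)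
qed

lemma commute_up_to_swap:
  assumes c: "c \<in> carrier G" "c \<otimes> c = \<one>" and uv: "u \<in> carrier G" "v \<in> carrier G"
    and up_to: "commute_up_to c u v" and nc: "u \<otimes> v \<noteq> v \<otimes> u"
  shows "u \<otimes> v = c \<otimes> (v \<otimes> u)" "c \<otimes> (u \<otimes> v) = v \<otimes> u"
proof -
  show uv_c: "u \<otimes> v = c \<otimes> (v \<otimes> u)" using up_to nc unfolding commute_up_to_def by blast
  show "c \<otimes> (u \<otimes> v) = v \<otimes> u" unfolding uv_c using c uv by (simp add: m_assoc[symmetric])
qed

lemma central_involution_shift:
  assumes c: "c \<in> carrier G" "c \<otimes> c = \<one>" and central: "\<And>a. a \<in> carrier G \<Longrightarrow> a \<otimes> c = c \<otimes> a"
    and uv: "u \<in> carrier G" "v \<in> carrier G"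
  shows "u \<otimes> (c \<otimes> v) = c \<otimes> (u \<otimes> v)" "(c \<otimes> u) \<otimes> v = c \<otimes> (u \<otimes> v)"
    "(c \<otimes> u) \<otimes> (c \<otimes> v) = u \<otimes> v"
proof -
  show left: "u \<otimes> (c \<otimes> v) = c \<otimes> (u \<otimes> v)"
    using c uv central[OF uv(1)] by (simp add: m_assoc[symmetric])
  show right: "(c \<otimes> u) \<otimes> v = c \<otimes> (u \<otimes> v)"
    using c uv by (simp add: m_assoc)
  have "(c \<otimes> u) \<otimes> (c \<otimes> v) = c \<otimes> (u \<otimes> (c \<otimes> v))"
    using c uv by (simp add: m_assoc)
  also have "\<dots> = c \<otimes> (c \<otimes> (u \<otimes> v))" unfolding left ..
  finally show "(c \<otimes> u) \<otimes> (c \<otimes> v) = u \<otimes> v"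
    using c uv by (simp add: m_assoc[symmetric])
qed

lemma commutator_eq:
  assumes "a \<in> carrier G" "b \<in> carrier G"
  shows "a \<otimes> b \<otimes> inv a \<otimes> inv b = (a \<otimes> b) \<otimes> inv (b \<otimes> a)"
  using assms by (simp add: m_assoc inv_mult_group)

lemma commutator_in_derived:
  assumes "a \<in> carrier G" "b \<in> carrier G"
  shows "(a \<otimes> b) \<otimes> inv (b \<otimes> a) \<in> derived G (carrier G)"
proof -
  have "a \<otimes> b \<otimes> inv a \<otimes> inv b \<in> derived_set G (carrier G)"
    using assms by blast
  then show ?thesis
    unfolding derived_def commutator_eq[OF assms] by (rule generate.incl)
qed

lemma derived_eq_pair:
  assumes c: "c \<in> carrier G" "c \<otimes> c = \<one>"
    and up_to: "\<And>a b. a \<in> carrier G \<Longrightarrow> b \<in> carrier G \<Longrightarrow> commute_up_to c a b"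
    and nc: "g \<in> carrier G" "h \<in> carrier G" "g \<otimes> h \<noteq> h \<otimes> g"
  shows "derived G (carrier G) = {\<one>, c}"
proof
  have inv_c: "inv c = c" using c by (intro inv_equality) auto
  have "subgroup {\<one>, c} G"
    by (rule subgroupI) (use c inv_c in auto)
  moreover have "derived_set G (carrier G) \<subseteq> {\<one>, c}"
  proof
    fix w assume "w \<in> derived_set G (carrier G)"
    then obtain a b where ab: "a \<in> carrier G" "b \<in> carrier G" "w = (a \<otimes> b) \<otimes> inv (b \<otimes> a)"
      using commutator_eq by blast
    from up_to[OF ab(1,2)] show "w \<in> {\<one>, c}"
      unfolding commute_up_to_def
    proof
      assume "a \<otimes> b = b \<otimes> a"
      then show ?thesis using ab by simp
    next
      assume "a \<otimes> b = c \<otimes> (b \<otimes> a)"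
      then show ?thesis using ab c by (simp add: m_assoc)
    qed
  qed
  ultimately show "derived G (carrier G) \<subseteq> {\<one>, c}"
    unfolding derived_def by (rule generate_subgroup_incl[rotated])
next
  have "g \<otimes> h = c \<otimes> (h \<otimes> g)"
    using up_to[OF nc(1,2)] nc(3) unfolding commute_up_to_def by blast
  then have "c = (g \<otimes> h) \<otimes> inv (h \<otimes> g)"
    using nc c inv_solve_right[of c "g \<otimes> h" "h \<otimes> g"] by simp
  then have "c \<in> derived G (carrier G)"
    using commutator_in_derived[OF nc(1,2)] by simp
  moreover have "\<one> \<in> derived G (carrier G)"
    using subgroup.one_closed[OF derived_is_subgroup] by blast
  ultimately show "{\<one>, c} \<subseteq> derived G (carrier G)" by simp
qed

lemma card_derived_two:
  assumes "card (derived G (carrier G)) = 2"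
  obtains c where "c \<in> carrier G" "c \<otimes> c = \<one>" "derived G (carrier G) = {\<one>, c}"
    "\<And>a. a \<in> carrier G \<Longrightarrow> a \<otimes> c = c \<otimes> a"
    "\<And>a b. a \<in> carrier G \<Longrightarrow> b \<in> carrier G \<Longrightarrow> commute_up_to c a b"
proof -
  let ?D = "derived G (carrier G)"
  have D_sub: "subgroup ?D G" by (rule derived_is_subgroup) simp
  obtain c where D: "?D = {\<one>, c}" and c_ne: "c \<noteq> \<one>"
  proof -
    obtain x y where xy: "?D = {x, y}" "x \<noteq> y" using assms card_2_iff by metis
    have "\<one> \<in> ?D" using subgroup.one_closed[OF D_sub] .
    then have "x = \<one> \<or> y = \<one>" using xy by auto
    then show ?thesis
    proof
      assume "x = \<one>" then show ?thesis using that xy by simp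
    next
      assume "y = \<one>" then show ?thesis using that xy by (simp add: insert_commute)
    qed
  qed
  have c: "c \<in> carrier G" using D subgroup.subset[OF D_sub] by blast
  have "inv c \<in> ?D" using subgroup.m_inv_closed[OF D_sub] D by blast
  moreover have "inv c \<noteq> \<one>" using c c_ne inv_eq_1_iff by blast
  ultimately have "inv c = c" using D by blast
  then have c2: "c \<otimes> c = \<one>" using c by (metis r_inv)
  have up_to: "commute_up_to c a b" if ab: "a \<in> carrier G" "b \<in> carrier G" for a b
  proof -
    have "(a \<otimes> b) \<otimes> inv (b \<otimes> a) = \<one> \<or> (a \<otimes> b) \<otimes> inv (b \<otimes> a) = c"
      using commutator_in_derived[OF ab] D by blast
    then show ?thesis
      using ab c inv_solve_right'[of \<one> "a \<otimes> b" "b \<otimes> a"] inv_solve_right'[of c "a \<otimes> b" "b \<otimes> a"]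
      unfolding commute_up_to_def by simp
  qed
  have central: "a \<otimes> c = c \<otimes> a" if a: "a \<in> carrier G" for a
  proof (rule ccontr)
    assume "a \<otimes> c \<noteq> c \<otimes> a"
    then have "a \<otimes> c = c \<otimes> (c \<otimes> a)" using up_to[OF a c] unfolding commute_up_to_def by blast
    then have "a \<otimes> c = a \<otimes> \<one>" using a c c2 by (simp add: m_assoc[symmetric])
    then show False using a c c_ne by simp
  qed
  show ?thesis using that c c2 D central up_to by blast
qed

end

section \<open>Involutions and skew elements\<close>

locale group_involution = group G for G (structure) +
  fixes \<phi> :: "'a \<Rightarrow> 'a"
  assumes involution: "grp_involution G \<phi>"
begin

lemma phi_closed [simp]: "g \<in> carrier G \<Longrightarrow> \<phi> g \<in> carrier G"
  using involution unfolding grp_involution_def by auto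

lemma phi_mult: "g \<in> carrier G \<Longrightarrow> h \<in> carrier G \<Longrightarrow> \<phi> (g \<otimes> h) = \<phi> h \<otimes> \<phi> g"
  using involution unfolding grp_involution_def by auto

lemma phi_phi [simp]: "g \<in> carrier G \<Longrightarrow> \<phi> (\<phi> g) = g"
  using involution unfolding grp_involution_def by auto

lemma phi_one [simp]: "\<phi> \<one> = \<one>"
proof -
  have "\<phi> \<one> \<otimes> \<phi> \<one> = \<phi> \<one> \<otimes> \<one>" using phi_mult[of \<one> \<one>] by simp
  then show ?thesis by (metis l_cancel one_closed phi_closed)
qed

lemma phi_inv: "g \<in> carrier G \<Longrightarrow> \<phi> (inv g) = inv (\<phi> g)"
  using phi_mult[of g "inv g"] by (intro inv_equality[symmetric]) auto

lemma phi_eq_iff: "a \<in> carrier G \<Longrightarrow> b \<in> carrier G \<Longrightarrow> \<phi> a = b \<longleftrightarrow> a = \<phi> b"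
  by (metis phi_phi)

lemma phi_inj: "a \<in> carrier G \<Longrightarrow> b \<in> carrier G \<Longrightarrow> \<phi> a = \<phi> b \<longleftrightarrow> a = b"
  by (metis phi_phi)

text \<open>The elements not fixed by \<open>\<phi>\<close>; they generate the subgroup \<open>K\<close> of the theorem.\<close>

definition moved :: "'a set" where
  "moved = {g \<in> carrier G. \<phi> g \<noteq> g}"

abbreviation fixed :: "'a set" where
  "fixed \<equiv> fixed_set G \<phi>"

lemma moved_iff: "g \<in> moved \<longleftrightarrow> g \<in> carrier G \<and> \<phi> g \<noteq> g"
  unfolding moved_def by simp

lemma fixed_iff: "x \<in> fixed \<longleftrightarrow> x \<in> carrier G \<and> \<phi> x = x"
  unfolding fixed_set_def by simp

lemma moved_carrier: "g \<in> moved \<Longrightarrow> g \<in> carrier G"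
  unfolding moved_iff by simp

lemma fixed_carrier: "x \<in> fixed \<Longrightarrow> x \<in> carrier G"
  unfolding fixed_iff by simp

lemma fixed_iff_not_moved: "x \<in> carrier G \<Longrightarrow> x \<in> fixed \<longleftrightarrow> x \<notin> moved"
  unfolding fixed_iff moved_iff by simp

lemma moved_eq: "{g \<in> carrier G. g \<notin> fixed} = moved"
  unfolding moved_def fixed_set_def by auto

lemma moved_phi: "g \<in> moved \<Longrightarrow> \<phi> g \<in> moved"
  unfolding moved_iff by auto

lemma moved_inv: "k \<in> moved \<Longrightarrow> inv k \<in> moved"
  unfolding moved_iff using phi_inv by (metis inv_closed inv_inv)

lemma skew_iff:
  "\<alpha> \<in> skew_elems G \<phi> \<longleftrightarrow> \<alpha> \<in> grp_ring G \<and> (\<forall>z\<in>carrier G. \<alpha> (\<phi> z) = - \<alpha> z)"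
proof (cases "\<alpha> \<in> grp_ring G")
  case True
  then have outside: "\<alpha> z = 0" if "z \<notin> carrier G" for z
    using that unfolding grp_ring_def by blast
  have "grp_ring_inv G \<phi> \<alpha> = - \<alpha> \<longleftrightarrow> (\<forall>z. grp_ring_inv G \<phi> \<alpha> z = - \<alpha> z)"
    by (simp add: fun_eq_iff)
  also have "\<dots> \<longleftrightarrow> (\<forall>z\<in>carrier G. \<alpha> (\<phi> z) = - \<alpha> z)"
    unfolding grp_ring_inv_def using outside by auto
  finally show ?thesis using True unfolding skew_elems_def by blast
next
  case False
  then show ?thesis unfolding skew_elems_def by blast
qed

definition skew_gen :: "'r \<Rightarrow> 'a \<Rightarrow> 'a \<Rightarrow> 'r::comm_ring_1" where
  "skew_gen r g = single_elem g r + single_elem (\<phi> g) (- r)"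

lemma skew_gen_grp_ring: "g \<in> carrier G \<Longrightarrow> skew_gen r g \<in> grp_ring G"
  unfolding skew_gen_def by (intro grp_ring_add single_elem_grp_ring) auto

lemma skew_gen_apply: "skew_gen r g z = (if z = g then r else 0) - (if z = \<phi> g then r else 0)"
  unfolding skew_gen_def single_elem_def by simp

lemma skew_gen_skew: "g \<in> carrier G \<Longrightarrow> skew_gen r g \<in> skew_elems G \<phi>"
proof -
  assume g: "g \<in> carrier G"
  have "skew_gen r g (\<phi> z) = - skew_gen r g z" if z: "z \<in> carrier G" for z
    unfolding skew_gen_apply phi_eq_iff[OF z g] phi_inj[OF z g] by simp
  then show ?thesis unfolding skew_iff using skew_gen_grp_ring[OF g] by blast
qed

lemma single_fixed_skew: "x \<in> fixed \<Longrightarrow> s \<in> R2 \<Longrightarrow> single_elem x s \<in> skew_elems G \<phi>"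
proof -
  assume x: "x \<in> fixed" and s: "s \<in> R2"
  have neg: "- s = s" using s unfolding R2_iff by (rule sym)
  have xc: "x \<in> carrier G" "\<phi> x = x" using x unfolding fixed_iff by auto
  have "single_elem x s (\<phi> z) = - single_elem x s z" if z: "z \<in> carrier G" for z
    unfolding single_elem_def phi_eq_iff[OF z xc(1)] xc(2) using neg by simp
  then show ?thesis unfolding skew_iff using single_elem_grp_ring[OF xc(1)] by blast
qed

lemma skew_diff: "\<alpha> \<in> skew_elems G \<phi> \<Longrightarrow> \<beta> \<in> skew_elems G \<phi> \<Longrightarrow> \<alpha> - \<beta> \<in> skew_elems G \<phi>"
  unfolding skew_iff by (simp add: grp_ring_diff)

definition skew_gens :: "('a \<Rightarrow> 'r::comm_ring_1) set" where
  "skew_gens = {skew_gen r g | r g. g \<in> moved} \<union> {single_elem x s | x s. x \<in> fixed \<and> s \<in> R2}"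

lemma skew_gen_in_gens: "g \<in> moved \<Longrightarrow> skew_gen r g \<in> skew_gens"
  unfolding skew_gens_def by blast

lemma single_in_gens: "x \<in> fixed \<Longrightarrow> s \<in> R2 \<Longrightarrow> single_elem x s \<in> skew_gens"
  unfolding skew_gens_def by blast

lemma skew_gens_skew: "skew_gens \<subseteq> skew_elems G \<phi>"
  unfolding skew_gens_def moved_iff using skew_gen_skew single_fixed_skew by blast

lemma skew_gens_grp_ring: "skew_gens \<subseteq> grp_ring G"
  using skew_gens_skew unfolding skew_elems_def by blast

text \<open>A generator agreeing with a skew element at \<open>g\<close> whose support lies in that of the element;
  subtracting it shrinks the support.\<close>

lemma skew_peel:
  assumes \<alpha>: "\<alpha> \<in> skew_elems G \<phi>" and g: "\<alpha> g \<noteq> 0"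
  obtains \<gamma> where "\<gamma> \<in> skew_gens" "\<gamma> g = \<alpha> g" "{z. \<gamma> z \<noteq> 0} \<subseteq> {z. \<alpha> z \<noteq> 0}"
proof -
  have gc: "g \<in> carrier G" and skew_g: "\<alpha> (\<phi> g) = - \<alpha> g"
    using \<alpha> g unfolding skew_iff grp_ring_def by auto
  show ?thesis
  proof (cases "\<phi> g = g")
    case True
    then have "\<alpha> g \<in> R2" using skew_g unfolding R2_iff by simp
    then have "single_elem g (\<alpha> g) \<in> skew_gens"
      using gc True by (intro single_in_gens) (simp_all add: fixed_iff)
    then show ?thesis
      by (rule that) (auto simp: single_elem_def g)
  next
    case False
    then have "skew_gen (\<alpha> g) g \<in> skew_gens"
      using gc by (intro skew_gen_in_gens) (simp add: moved_iff)
    then show ?thesis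
      by (rule that) (use False skew_g g in \<open>auto simp: skew_gen_apply split: if_splits\<close>)
  qed
qed

lemma skew_in_span:
  assumes "\<alpha> \<in> skew_elems G \<phi>"
  shows "in_add_span skew_gens (\<alpha> :: 'a \<Rightarrow> 'r::comm_ring_1)"
  using assms
proof (induction "card {z. \<alpha> z \<noteq> 0}" arbitrary: \<alpha> rule: less_induct)
  case less
  have fin: "finite {z. \<alpha> z \<noteq> 0}"
    using less.prems unfolding skew_iff grp_ring_def by blast
  show ?case
  proof (cases "\<exists>g. \<alpha> g \<noteq> 0")
    case False
    then have "\<alpha> = 0" by (simp add: fun_eq_iff)
    then show ?thesis by (simp add: add_span_zero)
  next
    case True
    then obtain g where g: "\<alpha> g \<noteq> 0" by blast
    obtain \<gamma> where \<gamma>: "\<gamma> \<in> skew_gens" "\<gamma> g = \<alpha> g" "{z. \<gamma> z \<noteq> 0} \<subseteq> {z. \<alpha> z \<noteq> 0}"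
      using skew_peel[OF less.prems g] by blast
    have skew: "\<alpha> - \<gamma> \<in> skew_elems G \<phi>"
      using skew_diff less.prems skew_gens_skew \<gamma>(1) by blast
    have "{z. (\<alpha> - \<gamma>) z \<noteq> 0} \<subseteq> {z. \<alpha> z \<noteq> 0} - {g}"
      using \<gamma>(2,3) by auto
    then have "card {z. (\<alpha> - \<gamma>) z \<noteq> 0} \<le> card ({z. \<alpha> z \<noteq> 0} - {g})"
      using fin by (intro card_mono) auto
    also have "\<dots> < card {z. \<alpha> z \<noteq> 0}"
      using fin g by (intro card_Diff1_less) auto
    finally have "card {z. (\<alpha> - \<gamma>) z \<noteq> 0} < card {z. \<alpha> z \<noteq> 0}" .
    then have "in_add_span skew_gens (\<alpha> - \<gamma>)"
      using less.hyps skew by blast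
    then have "in_add_span skew_gens (\<gamma> + (\<alpha> - \<gamma>))"
      using \<gamma>(1) by (rule add_span_add[rotated])
    then show ?thesis by (simp add: fun_eq_iff)
  qed
qed

lemma skew_commutative_iff_gens:
  "(\<forall>\<alpha>\<in>(skew_elems G \<phi> :: ('a \<Rightarrow> 'r::comm_ring_1) set). \<forall>\<beta>\<in>skew_elems G \<phi>.
      grp_ring_mult G \<alpha> \<beta> = grp_ring_mult G \<beta> \<alpha>)
   \<longleftrightarrow> (\<forall>a\<in>(skew_gens :: ('a \<Rightarrow> 'r) set). \<forall>b\<in>skew_gens. grp_ring_mult G a b = grp_ring_mult G b a)"
  using skew_gens_skew add_span_commute[OF skew_gens_grp_ring] skew_in_span by blast

lemma mult_skew_gen_left:
  "g \<in> carrier G \<Longrightarrow> grp_ring_mult G (skew_gen r g) \<beta>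
    = grp_ring_mult G (single_elem g r) \<beta> + grp_ring_mult G (single_elem (\<phi> g) (- r)) \<beta>"
  unfolding skew_gen_def by (intro grp_ring_mult_add_left single_elem_grp_ring) auto

lemma mult_skew_gen_right:
  "grp_ring_mult G \<alpha> (skew_gen r g)
    = grp_ring_mult G \<alpha> (single_elem g r) + grp_ring_mult G \<alpha> (single_elem (\<phi> g) (- r))"
  unfolding skew_gen_def by (rule grp_ring_mult_add_right)

lemma mult_skew_gen_skew_gen:
  assumes "g \<in> carrier G" "h \<in> carrier G"
  shows "grp_ring_mult G (skew_gen r g) (skew_gen t h) z
    = r * t * (of_bool (z = g \<otimes> h) - of_bool (z = g \<otimes> \<phi> h)
               - of_bool (z = \<phi> g \<otimes> h) + of_bool (z = \<phi> g \<otimes> \<phi> h))"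
  using assms
  by (simp add: mult_skew_gen_left mult_skew_gen_right grp_ring_mult_single)
    (simp add: single_elem_def algebra_simps)

lemma mult_fixed_skew_gen:
  assumes "x \<in> carrier G" "g \<in> carrier G"
  shows "grp_ring_mult G (single_elem x s) (skew_gen r g) z
    = r * s * (of_bool (z = x \<otimes> g) - of_bool (z = x \<otimes> \<phi> g))"
  using assms
  by (simp add: mult_skew_gen_right grp_ring_mult_single) (simp add: single_elem_def algebra_simps)

lemma mult_skew_gen_fixed:
  assumes "x \<in> carrier G" "g \<in> carrier G"
  shows "grp_ring_mult G (skew_gen r g) (single_elem x s) z
    = r * s * (of_bool (z = g \<otimes> x) - of_bool (z = \<phi> g \<otimes> x))"
  using assms
  by (simp add: mult_skew_gen_left grp_ring_mult_single) (simp add: single_elem_def algebra_simps)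

text \<open>The generators commute iff three families of products commute; scalars other than
  1 on moved generators can be factored out.\<close>

lemma skew_gens_commute_iff:
  "(\<forall>a\<in>(skew_gens :: ('a \<Rightarrow> 'r::comm_ring_1) set). \<forall>b\<in>skew_gens. grp_ring_mult G a b = grp_ring_mult G b a)
   \<longleftrightarrow> (\<forall>g\<in>moved. \<forall>h\<in>moved.
          grp_ring_mult G (skew_gen 1 g) (skew_gen 1 h) = grp_ring_mult G (skew_gen 1 h) (skew_gen (1::'r) g))
     \<and> (\<forall>x\<in>fixed. \<forall>k\<in>moved. \<forall>s\<in>(R2::'r set).
          grp_ring_mult G (single_elem x s) (skew_gen 1 k) = grp_ring_mult G (skew_gen 1 k) (single_elem x s))
     \<and> (\<forall>x\<in>fixed. \<forall>y\<in>fixed. \<forall>s\<in>(R2::'r set). \<forall>t\<in>R2.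
          grp_ring_mult G (single_elem x s) (single_elem y t) = grp_ring_mult G (single_elem y t) (single_elem x s))"
  (is "?gens \<longleftrightarrow> ?NN \<and> ?SN \<and> ?SS")
proof
  assume ?gens
  then show "?NN \<and> ?SN \<and> ?SS"
    using skew_gen_in_gens single_in_gens by blast
next
  assume conds: "?NN \<and> ?SN \<and> ?SS"
  have NN: "grp_ring_mult G (skew_gen r g) (skew_gen t h) = grp_ring_mult G (skew_gen t h) (skew_gen r g)"
    if "g \<in> moved" "h \<in> moved" for g h and r t :: 'r
  proof
    fix z
    have "grp_ring_mult G (skew_gen 1 g) (skew_gen 1 h) z = grp_ring_mult G (skew_gen 1 h) (skew_gen (1::'r) g) z"
      using conds that by simp
    then show "grp_ring_mult G (skew_gen r g) (skew_gen t h) z = grp_ring_mult G (skew_gen t h) (skew_gen r g) z"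
      using that by (simp add: mult_skew_gen_skew_gen moved_iff mult.commute)
  qed
  have SN: "grp_ring_mult G (single_elem x s) (skew_gen r k) = grp_ring_mult G (skew_gen r k) (single_elem x s)"
    if "x \<in> fixed" "k \<in> moved" "s \<in> R2" for x k s and r :: 'r
  proof
    fix z
    have xk: "x \<in> carrier G" "k \<in> carrier G" using that unfolding fixed_iff moved_iff by auto
    have "grp_ring_mult G (single_elem x s) (skew_gen 1 k) z = grp_ring_mult G (skew_gen 1 k) (single_elem x s) z"
      using conds that by simp
    then show "grp_ring_mult G (single_elem x s) (skew_gen r k) z = grp_ring_mult G (skew_gen r k) (single_elem x s) z"
      unfolding mult_fixed_skew_gen[OF xk] mult_skew_gen_fixed[OF xk] mult_1_left mult.assoc
      by (rule arg_cong)
  qed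
  show ?gens
    unfolding skew_gens_def using NN SN conds by auto
qed

lemma fixed_pair_commute_iff:
  assumes "x \<in> carrier G" "y \<in> carrier G"
  shows "grp_ring_mult G (single_elem x s) (single_elem y t) = grp_ring_mult G (single_elem y t) (single_elem x s)
    \<longleftrightarrow> s * t = 0 \<or> x \<otimes> y = y \<otimes> x"
proof -
  have "single_elem (x \<otimes> y) (s * t) = single_elem (y \<otimes> x) (t * s) \<longleftrightarrow> s * t = 0 \<or> x \<otimes> y = y \<otimes> x"
    unfolding single_elem_def fun_eq_iff by (metis mult.commute)
  then show ?thesis using assms by (simp add: grp_ring_mult_single)
qed

section \<open>Group relations forced by commuting generators\<close>

lemma fixed_moved_relation:
  assumes s: "s \<in> R2" "s \<noteq> 0" and x: "x \<in> fixed" and k: "k \<in> moved"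
    and comm: "grp_ring_mult G (single_elem x s) (skew_gen 1 k) = grp_ring_mult G (skew_gen 1 k) (single_elem x s)"
  shows "x \<otimes> k = k \<otimes> x \<or> (x \<otimes> k = \<phi> k \<otimes> x \<and> x \<otimes> \<phi> k = k \<otimes> x)"
proof (cases "x \<otimes> k = k \<otimes> x")
  case nc: False
  have xc: "x \<in> carrier G" and kc: "k \<in> carrier G" and pk: "\<phi> k \<noteq> k"
    using x k fixed_carrier moved_carrier moved_iff by auto
  have coeff: "s * (of_bool (z = x \<otimes> k) - of_bool (z = x \<otimes> \<phi> k))
      = s * (of_bool (z = k \<otimes> x) - of_bool (z = \<phi> k \<otimes> x))" for z
    using fun_cong[OF comm, of z] by (simp add: mult_fixed_skew_gen mult_skew_gen_fixed xc kc)
  have d1: "x \<otimes> \<phi> k \<noteq> x \<otimes> k" using xc kc pk by simp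
  have a1: "\<phi> k \<otimes> x = x \<otimes> k"
  proof (rule ccontr)
    assume "\<phi> k \<otimes> x \<noteq> x \<otimes> k"
    then have "s = 0" using coeff[of "x \<otimes> k"] nc d1 by simp
    then show False using s by simp
  qed
  have a2: "k \<otimes> x = x \<otimes> \<phi> k"
  proof (rule ccontr)
    assume "k \<otimes> x \<noteq> x \<otimes> \<phi> k"
    then have "- s = 0" using coeff[of "x \<otimes> \<phi> k"] a1 d1 by simp
    then show False using s by simp
  qed
  show ?thesis using a1 a2 by simp
qed simp

text \<open>The relations satisfied by two non-commuting moved elements.\<close>

definition skew_pair :: "'a \<Rightarrow> 'a \<Rightarrow> bool" where
  "skew_pair g h \<longleftrightarrow> g \<otimes> h = \<phi> g \<otimes> \<phi> h \<and> g \<otimes> h = h \<otimes> \<phi> g \<and> g \<otimes> h = \<phi> h \<otimes> g"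

lemma moved_pair_relation:
  assumes two: "(2::'r::comm_ring_1) \<noteq> 0" and three: "(3::'r) \<noteq> 0"
    and rel: "\<And>x k. x \<in> fixed \<Longrightarrow> k \<in> moved \<Longrightarrow> x \<otimes> k = k \<otimes> x \<or> (x \<otimes> k = \<phi> k \<otimes> x \<and> x \<otimes> \<phi> k = k \<otimes> x)"
    and g: "g \<in> moved" and h: "h \<in> moved" and nc: "g \<otimes> h \<noteq> h \<otimes> g"
    and comm: "grp_ring_mult G (skew_gen 1 g) (skew_gen 1 h) = grp_ring_mult G (skew_gen 1 h) (skew_gen (1::'r) g)"
  shows "skew_pair g h \<and> (4::'r) = 0"
proof -
  have gc: "g \<in> carrier G" and hc: "h \<in> carrier G" and pg: "\<phi> g \<noteq> g" and ph: "\<phi> h \<noteq> h"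
    using g h moved_carrier moved_iff by auto
  have "g \<otimes> \<phi> h \<noteq> g \<otimes> h" "\<phi> g \<otimes> h \<noteq> g \<otimes> h" using gc hc ph pg by simp_all
  then have "(1::'r) + of_bool (\<phi> g \<otimes> \<phi> h = g \<otimes> h) + of_bool (h \<otimes> \<phi> g = g \<otimes> h)
      + of_bool (\<phi> h \<otimes> g = g \<otimes> h) - of_bool (\<phi> h \<otimes> \<phi> g = g \<otimes> h) = 0"
    using fun_cong[OF comm, of "g \<otimes> h"] nc
    by (simp add: mult_skew_gen_skew_gen gc hc eq_commute[of "g \<otimes> h"] algebra_simps)
  note count = of_bool_sum_zero[OF this two three]
  show ?thesis
  proof (cases "\<phi> h \<otimes> \<phi> g = g \<otimes> h")
    case False
    then show ?thesis using count unfolding skew_pair_def by auto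
  next
    case True
    then have gh_fixed: "g \<otimes> h \<in> fixed" using phi_mult[OF gc hc] gc hc unfolding fixed_iff by simp
    have "h \<otimes> \<phi> g = g \<otimes> h"
      using rel[OF gh_fixed g]
    proof
      assume "g \<otimes> h \<otimes> g = g \<otimes> (g \<otimes> h)"
      then have "g \<otimes> (h \<otimes> g) = g \<otimes> (g \<otimes> h)" using gc hc by (simp add: m_assoc)
      then show ?thesis using nc gc hc by simp
    next
      assume "g \<otimes> h \<otimes> g = \<phi> g \<otimes> (g \<otimes> h) \<and> g \<otimes> h \<otimes> \<phi> g = g \<otimes> (g \<otimes> h)"
      then have "g \<otimes> (h \<otimes> \<phi> g) = g \<otimes> (g \<otimes> h)" using gc hc by (simp add: m_assoc)
      then show ?thesis using gc hc by simp
    qed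
    then show ?thesis using count True by auto
  qed
qed

lemma skew_pair_twist:
  assumes g: "g \<in> carrier G" and h: "h \<in> carrier G"
    and gh: "skew_pair g h" and hg: "skew_pair h g"
  defines "c \<equiv> \<phi> g \<otimes> inv g"
  shows "c \<in> carrier G" "c \<otimes> c = \<one>" "g \<otimes> h = c \<otimes> (h \<otimes> g)" "\<phi> g = c \<otimes> g" "\<phi> h = c \<otimes> h"
    "c \<otimes> g = g \<otimes> c" "c \<otimes> h = h \<otimes> c"
proof -
  have e1: "g \<otimes> h = \<phi> g \<otimes> \<phi> h" and e2: "g \<otimes> h = h \<otimes> \<phi> g" and e3: "g \<otimes> h = \<phi> h \<otimes> g"
    using gh unfolding skew_pair_def by auto
  have e5: "h \<otimes> g = g \<otimes> \<phi> h" and e6: "h \<otimes> g = \<phi> g \<otimes> h"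
    using hg unfolding skew_pair_def by auto
  show cc: "c \<in> carrier G" unfolding c_def using g by simp
  show pg: "\<phi> g = c \<otimes> g" unfolding c_def using g by (simp add: m_assoc)
  have ph5: "\<phi> h = inv g \<otimes> (h \<otimes> g)" using inv_solve_left[of "\<phi> h" g "h \<otimes> g"] g h e5 by simp
  show E1: "g \<otimes> h = c \<otimes> (h \<otimes> g)" unfolding e1 pg ph5 using g h cc by (simp add: m_assoc)
  have "\<one> \<otimes> (h \<otimes> g) = (c \<otimes> c) \<otimes> (h \<otimes> g)"
    using e6 unfolding pg using E1 g h cc by (simp add: m_assoc)
  then show "c \<otimes> c = \<one>" using g h cc by (metis right_cancel m_closed one_closed)
  have "(h \<otimes> c) \<otimes> g = (c \<otimes> h) \<otimes> g"
    using e2 E1 unfolding pg using g h cc by (simp add: m_assoc)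
  then show "c \<otimes> h = h \<otimes> c" using g h cc by (metis right_cancel m_closed)
  have "\<phi> h \<otimes> g = (c \<otimes> h) \<otimes> g" using e3 E1 g h cc by (simp add: m_assoc)
  then show ph: "\<phi> h = c \<otimes> h" using g h cc by (metis right_cancel m_closed phi_closed)
  have "(g \<otimes> c) \<otimes> h = (c \<otimes> g) \<otimes> h"
    using e5 e6 unfolding pg ph using g h cc by (simp add: m_assoc)
  then show "c \<otimes> g = g \<otimes> c" using g h cc by (metis right_cancel m_closed)
qed

lemma fixed_commute:
  assumes comm: "\<forall>x\<in>fixed. \<forall>y\<in>fixed. \<forall>s\<in>(R2::'r::comm_ring_1 set). \<forall>t\<in>R2.
      grp_ring_mult G (single_elem x s) (single_elem y t) = grp_ring_mult G (single_elem y t) (single_elem x s)"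
    and nz: "\<exists>r1\<in>(R2::'r set). \<exists>r2\<in>R2. r1 * r2 \<noteq> 0"
  shows "\<forall>a\<in>fixed. \<forall>b\<in>fixed. a \<otimes> b = b \<otimes> a"
proof (intro ballI)
  fix a b assume a: "a \<in> fixed" and b: "b \<in> fixed"
  obtain r1 r2 :: 'r where r: "r1 \<in> R2" "r2 \<in> R2" "r1 * r2 \<noteq> 0" using nz by blast
  have "grp_ring_mult G (single_elem a r1) (single_elem b r2) = grp_ring_mult G (single_elem b r2) (single_elem a r1)"
    using comm a b r by blast
  then show "a \<otimes> b = b \<otimes> a"
    using fixed_pair_commute_iff[OF fixed_carrier[OF a] fixed_carrier[OF b]] r(3) by blast
qed

text \<open>If \<open>K\<close> is abelian and the fixed elements commute, \<open>G\<close> is abelian: elements outside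
  \<open>K\<close> and their products with moved elements are fixed.\<close>

lemma comm_group_if_generated_and_fixed_commute:
  assumes K: "\<forall>a\<in>generate G moved. \<forall>b\<in>generate G moved. a \<otimes> b = b \<otimes> a"
    and S: "\<forall>a\<in>fixed. \<forall>b\<in>fixed. a \<otimes> b = b \<otimes> a"
  shows "comm_group G"
proof -
  have moved_K: "moved \<subseteq> generate G moved" by (auto intro: generate.incl)
  have K_sub: "subgroup (generate G moved) G"
    by (rule generate_is_subgroup) (auto simp: moved_iff)
  have outside: "x \<otimes> k = k \<otimes> x"
    if x: "x \<in> carrier G" "x \<notin> generate G moved" and k: "k \<in> carrier G" for x k
  proof -
    have x_fixed: "x \<in> fixed" using x moved_K fixed_iff_not_moved by blast
    show ?thesis
    proof (cases "k \<in> moved")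
      case False
      then show ?thesis using S x_fixed k fixed_iff_not_moved by blast
    next
      case True
      then have "x \<otimes> k \<notin> generate G moved" using mult_notin_subgroup[OF K_sub x] moved_K by blast
      then have "x \<otimes> k \<in> fixed" using x k moved_K fixed_iff_not_moved by blast
      then have "x \<otimes> (x \<otimes> k) = (x \<otimes> k) \<otimes> x" using S x_fixed by blast
      then have "x \<otimes> (x \<otimes> k) = x \<otimes> (k \<otimes> x)" using x k by (simp add: m_assoc)
      then show ?thesis using x k by simp
    qed
  qed
  show ?thesis
  proof (rule group_comm_groupI)
    fix a b assume a: "a \<in> carrier G" and b: "b \<in> carrier G"
    show "a \<otimes> b = b \<otimes> a"
      using K outside[OF a _ b] outside[OF b _ a] by metis
  qed
qed

end

section \<open>The twisted case\<close>

text \<open>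
  The situation of case (b): moved elements that do not commute satisfy \<open>skew_pair\<close>,
  fixed and moved elements satisfy the relation of \<open>fixed_moved_relation\<close>,
  and some pair \<open>g\<^sub>0, h\<^sub>0\<close> of moved elements does not commute.
\<close>

locale twisted_involution = group_involution +
  fixes g0 h0 :: 'a
  assumes skew_pairs: "\<And>g h. g \<in> moved \<Longrightarrow> h \<in> moved \<Longrightarrow> g \<otimes> h \<noteq> h \<otimes> g \<Longrightarrow> skew_pair g h"
    and fixed_moved:
      "\<And>x k. x \<in> fixed \<Longrightarrow> k \<in> moved \<Longrightarrow> x \<otimes> k = k \<otimes> x \<or> (x \<otimes> k = \<phi> k \<otimes> x \<and> x \<otimes> \<phi> k = k \<otimes> x)"
    and g0: "g0 \<in> moved" and h0: "h0 \<in> moved" and noncomm: "g0 \<otimes> h0 \<noteq> h0 \<otimes> g0"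
begin

lemma noncommuting_twist:
  assumes g: "g \<in> moved" and h: "h \<in> moved" and nc: "g \<otimes> h \<noteq> h \<otimes> g"
  defines "c \<equiv> \<phi> g \<otimes> inv g"
  shows "c \<in> carrier G" "c \<otimes> c = \<one>" "g \<otimes> h = c \<otimes> (h \<otimes> g)" "\<phi> g = c \<otimes> g" "\<phi> h = c \<otimes> h"
    "c \<otimes> g = g \<otimes> c" "c \<otimes> h = h \<otimes> c" "\<phi> h \<otimes> inv h = c"
proof -
  have gc: "g \<in> carrier G" and hc: "h \<in> carrier G" using g h moved_carrier by auto
  have "skew_pair g h" "skew_pair h g" using skew_pairs g h nc by metis+
  note twist = skew_pair_twist[OF gc hc this, folded c_def]
  show "c \<in> carrier G" "c \<otimes> c = \<one>" "g \<otimes> h = c \<otimes> (h \<otimes> g)" "\<phi> g = c \<otimes> g" "\<phi> h = c \<otimes> h"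
    "c \<otimes> g = g \<otimes> c" "c \<otimes> h = h \<otimes> c"
    by (fact twist)+
  show "\<phi> h \<otimes> inv h = c" using twist(1,5) hc by (simp add: m_assoc)
qed

text \<open>The central involution generating \<open>G'\<close>.\<close>

definition twist :: 'a where
  "twist = \<phi> g0 \<otimes> inv g0"

lemma g0_carrier: "g0 \<in> carrier G" and h0_carrier: "h0 \<in> carrier G"
  using g0 h0 moved_carrier by auto

lemma twist_carrier [simp]: "twist \<in> carrier G"
  unfolding twist_def using g0_carrier by simp

lemma twist_facts:
  "twist \<otimes> twist = \<one>" "g0 \<otimes> h0 = twist \<otimes> (h0 \<otimes> g0)" "\<phi> g0 = twist \<otimes> g0" "\<phi> h0 = twist \<otimes> h0"
  "twist \<otimes> g0 = g0 \<otimes> twist" "twist \<otimes> h0 = h0 \<otimes> twist" "\<phi> h0 \<otimes> inv h0 = twist"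
  using noncommuting_twist[OF g0 h0 noncomm] unfolding twist_def by auto

lemma twist_ne_one: "twist \<noteq> \<one>"
  using twist_facts(2) noncomm g0_carrier h0_carrier by auto

lemma twist_cancel [simp]: "x \<in> carrier G \<Longrightarrow> twist \<otimes> (twist \<otimes> x) = x"
  using twist_facts(1) by (simp add: m_assoc[symmetric])

lemma twist_of_noncommuting:
  assumes y: "y \<in> moved" and k: "k \<in> moved" and nc: "y \<otimes> k \<noteq> k \<otimes> y"
    and k_twist: "\<phi> k \<otimes> inv k = twist"
  shows "\<phi> y = twist \<otimes> y" "twist \<otimes> y = y \<otimes> twist"
proof -
  note yk = noncommuting_twist[OF y k nc]
  have "\<phi> y \<otimes> inv y = twist" using yk(8) k_twist by simp
  then show "\<phi> y = twist \<otimes> y" "twist \<otimes> y = y \<otimes> twist"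
    using yk(4,6) by simp_all
qed

lemma twist_commuting:
  assumes y: "y \<in> carrier G" and yg: "y \<otimes> g0 = g0 \<otimes> y" and yh: "y \<otimes> h0 = h0 \<otimes> y"
  shows "twist \<otimes> y = y \<otimes> twist"
proof -
  have "twist = (g0 \<otimes> h0) \<otimes> inv (h0 \<otimes> g0)"
    using twist_facts(2) inv_solve_right[of twist "g0 \<otimes> h0" "h0 \<otimes> g0"] g0_carrier h0_carrier by simp
  then show ?thesis
    using y g0_carrier h0_carrier yg yh by (metis commute_mult commute_inv m_closed inv_closed)
qed

text \<open>A moved element commuting with \<open>g\<^sub>0\<close> and \<open>h\<^sub>0\<close>: the case \<open>y g\<^sub>0\<close> moved is impossible,
  and \<open>y g\<^sub>0\<close> fixed gives \<open>\<phi>(y) = c y\<close>.\<close>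

lemma phi_commuting_moved:
  assumes y: "y \<in> moved" and yg: "y \<otimes> g0 = g0 \<otimes> y" and yh: "y \<otimes> h0 = h0 \<otimes> y"
  shows "\<phi> y = twist \<otimes> y"
proof -
  have yc: "y \<in> carrier G" using y moved_carrier by simp
  note gh = g0_carrier h0_carrier
  have phi_yg: "\<phi> (y \<otimes> g0) = twist \<otimes> (g0 \<otimes> \<phi> y)"
    using phi_mult[OF yc gh(1)] twist_facts(3) yc gh by (simp add: m_assoc)
  show ?thesis
  proof (cases "y \<otimes> g0 \<in> moved")
    case True
    have "(y \<otimes> g0) \<otimes> h0 \<noteq> h0 \<otimes> (y \<otimes> g0)"
    proof
      assume "(y \<otimes> g0) \<otimes> h0 = h0 \<otimes> (y \<otimes> g0)"
      then have "y \<otimes> (g0 \<otimes> h0) = y \<otimes> (h0 \<otimes> g0)"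
        using yh yc gh by (metis m_assoc)
      then show False using noncomm yc gh by simp
    qed
    then have "\<phi> (y \<otimes> g0) = twist \<otimes> (y \<otimes> g0)"
      using twist_of_noncommuting(1)[OF True h0 _ twist_facts(7)] by blast
    then have "twist \<otimes> (g0 \<otimes> \<phi> y) = twist \<otimes> (g0 \<otimes> y)"
      using phi_yg yg by metis
    then have "\<phi> y = y" using yc gh by simp
    then show ?thesis using y unfolding moved_iff by simp
  next
    case False
    then have "\<phi> (y \<otimes> g0) = y \<otimes> g0" using yc gh unfolding moved_iff by simp
    have "g0 \<otimes> (twist \<otimes> \<phi> y) = (twist \<otimes> g0) \<otimes> \<phi> y"
      using twist_facts(5) yc gh by (simp add: m_assoc)
    also have "\<dots> = \<phi> (y \<otimes> g0)" using phi_yg yc gh by (simp add: m_assoc)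
    also have "\<dots> = g0 \<otimes> y" using \<open>\<phi> (y \<otimes> g0) = y \<otimes> g0\<close> yg by simp
    finally have "g0 \<otimes> (twist \<otimes> \<phi> y) = g0 \<otimes> y" .
    then have "twist \<otimes> \<phi> y = y" using yc gh by simp
    then show ?thesis using yc by (metis twist_cancel phi_closed)
  qed
qed

lemma phi_moved:
  assumes y: "y \<in> moved"
  shows "\<phi> y = twist \<otimes> y" "twist \<otimes> y = y \<otimes> twist"
proof -
  have yc: "y \<in> carrier G" using y moved_carrier by simp
  have "\<phi> y = twist \<otimes> y \<and> twist \<otimes> y = y \<otimes> twist"
  proof (cases "y \<otimes> g0 = g0 \<otimes> y \<and> y \<otimes> h0 = h0 \<otimes> y")
    case True
    then show ?thesis using phi_commuting_moved[OF y] twist_commuting[OF yc] by blast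
  next
    case False
    then consider "y \<otimes> g0 \<noteq> g0 \<otimes> y" | "y \<otimes> h0 \<noteq> h0 \<otimes> y" by blast
    then show ?thesis
    proof cases
      case 1
      then show ?thesis using twist_of_noncommuting[OF y g0 _ twist_def[symmetric]] by blast
    next
      case 2
      then show ?thesis using twist_of_noncommuting[OF y h0 _ twist_facts(7)] by blast
    qed
  qed
  then show "\<phi> y = twist \<otimes> y" "twist \<otimes> y = y \<otimes> twist" by blast+
qed

lemma g0h0_moved: "g0 \<otimes> h0 \<in> moved"
proof -
  note gh = g0_carrier h0_carrier
  have "\<phi> (g0 \<otimes> h0) = (twist \<otimes> h0) \<otimes> (twist \<otimes> g0)"
    using phi_mult[OF gh] twist_facts(3,4) by simp
  also have "\<dots> = twist \<otimes> ((h0 \<otimes> twist) \<otimes> g0)"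
    using gh by (simp add: m_assoc)
  also have "\<dots> = h0 \<otimes> g0" using gh twist_facts(6)[symmetric] by (simp add: m_assoc)
  finally show ?thesis unfolding moved_iff using noncomm gh by auto
qed

lemma fixed_times_moved:
  assumes x: "x \<in> fixed" and k: "k \<in> moved" and xk: "x \<otimes> k \<notin> moved"
  shows "x \<otimes> k = twist \<otimes> (k \<otimes> x)"
proof -
  have xc: "x \<in> carrier G" and kc: "k \<in> carrier G" using x k fixed_carrier moved_carrier by auto
  have "x \<otimes> k = \<phi> (x \<otimes> k)" using xk xc kc unfolding moved_iff by simp
  also have "\<dots> = twist \<otimes> (k \<otimes> x)"
    using phi_mult[OF xc kc] phi_moved(1)[OF k] x xc kc unfolding fixed_iff by (simp add: m_assoc)
  finally show ?thesis .
qed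

lemma fixed_moved_product: assumes x: "x \<in> fixed" shows "\<exists>k\<in>moved. x \<otimes> k \<in> moved"
proof (rule ccontr)
  assume "\<not> ?thesis"
  then have fixed_prods: "x \<otimes> g0 \<notin> moved" "x \<otimes> h0 \<notin> moved" "x \<otimes> (g0 \<otimes> h0) \<notin> moved"
    using g0 h0 g0h0_moved by auto
  note gh = g0_carrier h0_carrier
  have xc: "x \<in> carrier G" using x fixed_carrier by simp
  have "twist \<otimes> ((g0 \<otimes> h0) \<otimes> x) = x \<otimes> (g0 \<otimes> h0)"
    using fixed_times_moved[OF x g0h0_moved fixed_prods(3)] by simp
  also have "\<dots> = (x \<otimes> g0) \<otimes> h0" using xc gh by (simp add: m_assoc)
  also have "\<dots> = twist \<otimes> (g0 \<otimes> (twist \<otimes> (h0 \<otimes> x)))"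
    unfolding fixed_times_moved[OF x g0 fixed_prods(1)]
    using xc gh fixed_times_moved[OF x h0 fixed_prods(2)] by (simp add: m_assoc)
  also have "\<dots> = (g0 \<otimes> h0) \<otimes> x" using xc gh twist_facts(5)
    by (metis twist_cancel twist_carrier m_assoc m_closed)
  finally have "twist \<otimes> ((g0 \<otimes> h0) \<otimes> x) = \<one> \<otimes> ((g0 \<otimes> h0) \<otimes> x)" using xc gh by simp
  then have "twist = \<one>" using xc gh by (metis right_cancel m_closed one_closed twist_carrier)
  then show False using twist_ne_one by simp
qed

lemma twist_central: assumes y: "y \<in> carrier G" shows "twist \<otimes> y = y \<otimes> twist"
proof (cases "y \<in> moved")
  case True
  then show ?thesis using phi_moved(2) by blast
next
  case False
  then have "y \<in> fixed" using fixed_iff_not_moved y by blast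
  then obtain k where k: "k \<in> moved" "y \<otimes> k \<in> moved" using fixed_moved_product by blast
  have kc: "k \<in> carrier G" using k moved_carrier by simp
  have "twist \<otimes> ((y \<otimes> k) \<otimes> inv k) = ((y \<otimes> k) \<otimes> inv k) \<otimes> twist"
    by (rule commute_mult[OF twist_carrier _ _ phi_moved(2)[OF k(2)]
          commute_inv[OF twist_carrier kc phi_moved(2)[OF k(1)]]]) (use y kc in auto)
  then show ?thesis using y kc by (simp add: m_assoc)
qed

lemma commute_up_to_moved:
  assumes a: "a \<in> carrier G" and b: "b \<in> moved"
  shows "commute_up_to twist a b"
proof -
  have bc: "b \<in> carrier G" using b moved_carrier by simp
  show ?thesis
  proof (cases "a \<in> moved")
    case True
    show ?thesis
    proof (cases "a \<otimes> b = b \<otimes> a")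
      case False
      have "\<phi> a \<otimes> inv a = twist" using phi_moved(1)[OF True] a by (simp add: m_assoc)
      then show ?thesis
        using noncommuting_twist(3)[OF True b False] unfolding commute_up_to_def by simp
    qed (simp add: commute_up_to_def)
  next
    case False
    then have "a \<in> fixed" using fixed_iff_not_moved a by blast
    then show ?thesis
      using fixed_moved[OF \<open>a \<in> fixed\<close> b] phi_moved(1)[OF b] a bc unfolding commute_up_to_def
      by (auto simp: m_assoc)
  qed
qed

text \<open>All pairs commute up to \<open>c\<close>: fixed elements are quotients of moved ones.\<close>

lemma commute_up_to_all:
  assumes a: "a \<in> carrier G" and b: "b \<in> carrier G"
  shows "commute_up_to twist a b"
proof (cases "b \<in> moved")
  case True
  then show ?thesis using commute_up_to_moved a by blast
next
  case False
  then have "b \<in> fixed" using fixed_iff_not_moved b by blast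
  then obtain k where k: "k \<in> moved" "b \<otimes> k \<in> moved" using fixed_moved_product by blast
  have kc: "k \<in> carrier G" using k moved_carrier by simp
  have "commute_up_to twist a ((b \<otimes> k) \<otimes> inv k)"
    by (rule commute_up_to_mult[OF twist_carrier twist_facts(1) twist_central _ _ _
          commute_up_to_moved[OF a k(2)] commute_up_to_moved[OF a moved_inv[OF k(1)]]])
      (use a b kc in auto)
  then show ?thesis using b kc by (simp add: m_assoc)
qed

lemma derived_twist: "derived G (carrier G) = {\<one>, twist}"
  using derived_eq_pair[OF twist_carrier twist_facts(1) commute_up_to_all g0_carrier h0_carrier noncomm] .

lemma card_derived: "card (derived G (carrier G)) = 2"
  unfolding derived_twist using twist_ne_one by simp

lemma derived_cosets_phi:
  assumes g: "g \<in> carrier G"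
  shows "derived G (carrier G) #> \<phi> g = derived G (carrier G) #> g"
proof (cases "g \<in> moved")
  case True
  then have "\<phi> g = twist \<otimes> g" by (rule phi_moved(1))
  then show ?thesis unfolding derived_twist r_coset_def using g by auto
next
  case False
  then show ?thesis using g unfolding moved_iff by simp
qed

lemma squares_fixed:
  assumes g: "g \<in> carrier G"
  shows "g \<otimes> g \<in> fixed"
proof -
  have "\<phi> (g \<otimes> g) = g \<otimes> g"
  proof (cases "g \<in> moved")
    case True
    have "\<phi> (g \<otimes> g) = (twist \<otimes> g) \<otimes> (twist \<otimes> g)" using phi_mult[OF g g] phi_moved(1)[OF True] by simp
    also have "\<dots> = twist \<otimes> ((g \<otimes> twist) \<otimes> g)" using g by (simp add: m_assoc)
    also have "\<dots> = g \<otimes> g" using g twist_central[OF g, symmetric] by (simp add: m_assoc)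
    finally show ?thesis .
  next
    case False
    then show ?thesis using g phi_mult[OF g g] unfolding moved_iff by simp
  qed
  then show ?thesis using g unfolding fixed_iff by simp
qed

end

section \<open>The two cases of the theorem\<close>

context group_involution
begin

lemma commutative_skew_cases:
  assumes two: "(2::'r::comm_ring_1) \<noteq> 0" and three: "(3::'r) \<noteq> 0" and R2_nonzero: "(R2::'r set) \<noteq> {0}"
    and noncomm: "\<not> comm_group G"
    and C1: "\<forall>g\<in>moved. \<forall>h\<in>moved.
      grp_ring_mult G (skew_gen 1 g) (skew_gen 1 h) = grp_ring_mult G (skew_gen 1 h) (skew_gen (1::'r) g)"
    and C2: "\<forall>x\<in>fixed. \<forall>k\<in>moved. \<forall>s\<in>(R2::'r set).
      grp_ring_mult G (single_elem x s) (skew_gen 1 k) = grp_ring_mult G (skew_gen 1 k) (single_elem x s)"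
    and C3: "\<forall>x\<in>fixed. \<forall>y\<in>fixed. \<forall>s\<in>(R2::'r set). \<forall>t\<in>R2.
      grp_ring_mult G (single_elem x s) (single_elem y t) = grp_ring_mult G (single_elem y t) (single_elem x s)"
  shows "((\<forall>a\<in>generate G moved. \<forall>b\<in>generate G moved. a \<otimes> b = b \<otimes> a)
          \<and> (\<forall>r1\<in>(R2::'r set). \<forall>r2\<in>R2. r1 * r2 = 0))
    \<or> (CHAR('r) = 4 \<and> card (derived G (carrier G)) = 2
       \<and> (\<forall>g\<in>carrier G. derived G (carrier G) #> \<phi> g = derived G (carrier G) #> g)
       \<and> (\<forall>g\<in>carrier G. g \<otimes> g \<in> fixed)
       \<and> ((\<exists>r1\<in>(R2::'r set). \<exists>r2\<in>R2. r1 * r2 \<noteq> 0) \<longrightarrow> (\<forall>a\<in>fixed. \<forall>b\<in>fixed. a \<otimes> b = b \<otimes> a)))"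
proof -
  obtain s0 :: 'r where s0: "s0 \<in> R2" "s0 \<noteq> 0" using R2_nonzero unfolding R2_def by auto
  have rel: "x \<otimes> k = k \<otimes> x \<or> (x \<otimes> k = \<phi> k \<otimes> x \<and> x \<otimes> \<phi> k = k \<otimes> x)"
    if "x \<in> fixed" "k \<in> moved" for x k
    using fixed_moved_relation[OF s0 that] C2 that s0 by blast
  have fixed_comm: "(\<exists>r1\<in>(R2::'r set). \<exists>r2\<in>R2. r1 * r2 \<noteq> 0) \<longrightarrow> (\<forall>a\<in>fixed. \<forall>b\<in>fixed. a \<otimes> b = b \<otimes> a)"
    using fixed_commute[OF C3] by blast
  show ?thesis
  proof (cases "\<forall>g\<in>moved. \<forall>h\<in>moved. g \<otimes> h = h \<otimes> g")
    case True
    have "moved \<subseteq> carrier G" using moved_carrier by blast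
    then have K: "\<forall>a\<in>generate G moved. \<forall>b\<in>generate G moved. a \<otimes> b = b \<otimes> a"
      using generate_commute True by blast
    have "\<forall>r1\<in>(R2::'r set). \<forall>r2\<in>R2. r1 * r2 = 0"
      using fixed_comm comm_group_if_generated_and_fixed_commute[OF K] noncomm by blast
    then show ?thesis using K by blast
  next
    case False
    then obtain g0 h0 where g0: "g0 \<in> moved" and h0: "h0 \<in> moved" and nc: "g0 \<otimes> h0 \<noteq> h0 \<otimes> g0"
      by blast
    have pairs: "skew_pair g h \<and> (4::'r) = 0" if "g \<in> moved" "h \<in> moved" "g \<otimes> h \<noteq> h \<otimes> g" for g h
      using moved_pair_relation[OF two three rel that] C1 that by blast
    interpret twisted_involution G \<phi> g0 h0
      by unfold_locales (use pairs rel g0 h0 nc in auto)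
    have "CHAR('r) = 4" using CHAR_eq_4[OF two three] pairs[OF g0 h0 nc] by blast
    then show ?thesis
      using card_derived derived_cosets_phi squares_fixed fixed_comm by blast
  qed
qed

lemma abelian_case_commutative:
  assumes K: "\<forall>a\<in>generate G moved. \<forall>b\<in>generate G moved. a \<otimes> b = b \<otimes> a"
    and R2_sq: "\<forall>r1\<in>(R2::'r::comm_ring_1 set). \<forall>r2\<in>R2. r1 * r2 = 0"
  shows "(\<forall>g\<in>moved. \<forall>h\<in>moved.
      grp_ring_mult G (skew_gen 1 g) (skew_gen 1 h) = grp_ring_mult G (skew_gen 1 h) (skew_gen (1::'r) g))
    \<and> (\<forall>x\<in>fixed. \<forall>k\<in>moved. \<forall>s\<in>(R2::'r set).
      grp_ring_mult G (single_elem x s) (skew_gen 1 k) = grp_ring_mult G (skew_gen 1 k) (single_elem x s))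
    \<and> (\<forall>x\<in>fixed. \<forall>y\<in>fixed. \<forall>s\<in>(R2::'r set). \<forall>t\<in>R2.
      grp_ring_mult G (single_elem x s) (single_elem y t) = grp_ring_mult G (single_elem y t) (single_elem x s))"
proof (intro conjI ballI)
  have moved_K: "moved \<subseteq> generate G moved" by (auto intro: generate.incl)
  fix g h assume g: "g \<in> moved" and h: "h \<in> moved"
  have gc: "g \<in> carrier G" and hc: "h \<in> carrier G" using g h moved_carrier by auto
  have "h \<otimes> g = g \<otimes> h" "h \<otimes> \<phi> g = \<phi> g \<otimes> h" "\<phi> h \<otimes> g = g \<otimes> \<phi> h" "\<phi> h \<otimes> \<phi> g = \<phi> g \<otimes> \<phi> h"
    using K g h moved_phi moved_K by (meson subsetD)+
  then show "grp_ring_mult G (skew_gen 1 g) (skew_gen 1 h) = grp_ring_mult G (skew_gen 1 h) (skew_gen (1::'r) g)"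
    by (simp add: fun_eq_iff mult_skew_gen_skew_gen gc hc algebra_simps)
next
  have moved_K: "moved \<subseteq> generate G moved" by (auto intro: generate.incl)
  have K_sub: "subgroup (generate G moved) G"
    by (rule generate_is_subgroup) (auto simp: moved_iff)
  fix x k s assume x: "x \<in> fixed" and k: "k \<in> moved" and s: "s \<in> (R2::'r set)"
  have xc: "x \<in> carrier G" and kc: "k \<in> carrier G" using x k fixed_carrier moved_carrier by auto
  show "grp_ring_mult G (single_elem x s) (skew_gen 1 k) = grp_ring_mult G (skew_gen 1 k) (single_elem x s)"
  proof (cases "x \<in> generate G moved")
    case True
    have "k \<otimes> x = x \<otimes> k" "\<phi> k \<otimes> x = x \<otimes> \<phi> k"
      using K True k moved_phi moved_K by (meson subsetD)+
    then show ?thesis by (simp add: fun_eq_iff mult_fixed_skew_gen mult_skew_gen_fixed xc kc)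
  next
    case False
    have "x \<otimes> k \<in> fixed" "x \<otimes> \<phi> k \<in> fixed"
      using mult_notin_subgroup[OF K_sub xc False] k moved_phi moved_K xc kc fixed_iff_not_moved
      by (meson m_closed phi_closed subsetD)+
    then have "\<phi> k \<otimes> x = x \<otimes> k" "k \<otimes> x = x \<otimes> \<phi> k"
      using phi_mult[OF xc kc] phi_mult[OF xc phi_closed[OF kc]] x xc kc unfolding fixed_iff by auto
    then show ?thesis
      by (simp add: fun_eq_iff mult_fixed_skew_gen mult_skew_gen_fixed xc kc R2_swap[OF s])
  qed
next
  fix x y and s t :: 'r assume "x \<in> fixed" "y \<in> fixed" "s \<in> R2" "t \<in> R2"
  then show "grp_ring_mult G (single_elem x s) (single_elem y t) = grp_ring_mult G (single_elem y t) (single_elem x s)"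
    using fixed_pair_commute_iff fixed_carrier R2_sq by blast
qed

lemma phi_in_derived_coset:
  assumes D: "derived G (carrier G) = {\<one>, c}" and c: "c \<in> carrier G"
    and cosets: "\<forall>g\<in>carrier G. derived G (carrier G) #> \<phi> g = derived G (carrier G) #> g"
    and g: "g \<in> moved"
  shows "\<phi> g = c \<otimes> g"
proof -
  have gc: "g \<in> carrier G" using g moved_carrier by simp
  have "\<phi> g \<in> derived G (carrier G) #> \<phi> g" using D gc unfolding r_coset_def by force
  then have "\<phi> g = g \<or> \<phi> g = c \<otimes> g" using cosets gc unfolding D r_coset_def by auto
  then show ?thesis using g unfolding moved_iff by auto
qed

text \<open>Case (b) makes the three families commute: \<open>\<phi>(g) = c g\<close> on moved elements, and
  non-commuting products differ by the central involution \<open>c\<close>.\<close>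

lemma twisted_case_commutative:
  assumes char4: "CHAR('r::comm_ring_1) = 4" and card: "card (derived G (carrier G)) = 2"
    and cosets: "\<forall>g\<in>carrier G. derived G (carrier G) #> \<phi> g = derived G (carrier G) #> g"
    and fixed_comm: "(\<exists>r1\<in>(R2::'r set). \<exists>r2\<in>R2. r1 * r2 \<noteq> 0) \<longrightarrow> (\<forall>a\<in>fixed. \<forall>b\<in>fixed. a \<otimes> b = b \<otimes> a)"
  shows "(\<forall>g\<in>moved. \<forall>h\<in>moved.
      grp_ring_mult G (skew_gen 1 g) (skew_gen 1 h) = grp_ring_mult G (skew_gen 1 h) (skew_gen (1::'r) g))
    \<and> (\<forall>x\<in>fixed. \<forall>k\<in>moved. \<forall>s\<in>(R2::'r set).
      grp_ring_mult G (single_elem x s) (skew_gen 1 k) = grp_ring_mult G (skew_gen 1 k) (single_elem x s))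
    \<and> (\<forall>x\<in>fixed. \<forall>y\<in>fixed. \<forall>s\<in>(R2::'r set). \<forall>t\<in>R2.
      grp_ring_mult G (single_elem x s) (single_elem y t) = grp_ring_mult G (single_elem y t) (single_elem x s))"
proof -
  obtain c where c: "c \<in> carrier G" "c \<otimes> c = \<one>" and D: "derived G (carrier G) = {\<one>, c}"
    and central: "\<And>a. a \<in> carrier G \<Longrightarrow> a \<otimes> c = c \<otimes> a"
    and up_to: "\<And>a b. a \<in> carrier G \<Longrightarrow> b \<in> carrier G \<Longrightarrow> commute_up_to c a b"
    using card_derived_two[OF card] by blast
  note shift = central_involution_shift[OF c central]
  have four: "(4::'r) = 0" using char4 of_nat_CHAR[where 'a='r] by simp
  have phi_c: "\<phi> g = c \<otimes> g" if "g \<in> moved" for g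
    using phi_in_derived_coset[OF D c(1) cosets that] .
  have swap: "u \<otimes> v = c \<otimes> (v \<otimes> u)" "c \<otimes> (u \<otimes> v) = v \<otimes> u"
    if "u \<in> carrier G" "v \<in> carrier G" "u \<otimes> v \<noteq> v \<otimes> u" for u v
    using commute_up_to_swap[OF c that(1,2) up_to[OF that(1,2)] that(3)] by simp_all
  show ?thesis
  proof (intro conjI ballI)
    fix g h assume g: "g \<in> moved" and h: "h \<in> moved"
    have gc: "g \<in> carrier G" and hc: "h \<in> carrier G" using g h moved_carrier by auto
    show "grp_ring_mult G (skew_gen 1 g) (skew_gen 1 h) = grp_ring_mult G (skew_gen 1 h) (skew_gen (1::'r) g)"
    proof (cases "g \<otimes> h = h \<otimes> g")
      case True
      then show ?thesis
        by (simp add: fun_eq_iff mult_skew_gen_skew_gen gc hc phi_c g h shift)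
    next
      case False
      then show ?thesis
        using four_swap[OF four] swap(2)[OF gc hc False] swap(2)[OF hc gc] False
        by (simp add: fun_eq_iff mult_skew_gen_skew_gen gc hc phi_c g h shift)
    qed
  next
    fix x k and s :: 'r assume x: "x \<in> fixed" and k: "k \<in> moved" and s: "s \<in> R2"
    have xc: "x \<in> carrier G" and kc: "k \<in> carrier G" using x k fixed_carrier moved_carrier by auto
    show "grp_ring_mult G (single_elem x s) (skew_gen 1 k) = grp_ring_mult G (skew_gen 1 k) (single_elem x s)"
    proof (cases "x \<otimes> k = k \<otimes> x")
      case True
      then show ?thesis
        by (simp add: fun_eq_iff mult_fixed_skew_gen mult_skew_gen_fixed xc kc phi_c k shift)
    next
      case False
      then show ?thesis
        using R2_swap[OF s] swap[OF xc kc False]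
        by (simp add: fun_eq_iff mult_fixed_skew_gen mult_skew_gen_fixed xc kc phi_c k shift)
    qed
  next
    fix x y and s t :: 'r assume "x \<in> fixed" "y \<in> fixed" "s \<in> R2" "t \<in> R2"
    then show "grp_ring_mult G (single_elem x s) (single_elem y t) = grp_ring_mult G (single_elem y t) (single_elem x s)"
      using fixed_pair_commute_iff fixed_carrier fixed_comm by blast
  qed
qed

end

theorem theorem2p5:
  fixes G :: "('g, 'b) monoid_scheme" and \<phi> :: "'g \<Rightarrow> 'g"
  assumes "CHAR('r::comm_ring_1) \<noteq> 2"
    and "(R2 :: 'r set) \<noteq> {0}"
    and "group G"
    and "\<not> comm_group G"
    and "grp_involution G \<phi>"
  shows "(\<forall>\<alpha> \<in> (skew_elems G \<phi> :: ('g \<Rightarrow> 'r) set). \<forall>\<beta> \<in> skew_elems G \<phi>.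
            grp_ring_mult G \<alpha> \<beta> = grp_ring_mult G \<beta> \<alpha>)
    \<longleftrightarrow>
    ((\<forall>a \<in> generate G {g \<in> carrier G. g \<notin> fixed_set G \<phi>}.
        \<forall>b \<in> generate G {g \<in> carrier G. g \<notin> fixed_set G \<phi>}. a \<otimes>\<^bsub>G\<^esub> b = b \<otimes>\<^bsub>G\<^esub> a)
      \<and> (\<forall>r1 \<in> (R2 :: 'r set). \<forall>r2 \<in> R2. r1 * r2 = 0))
    \<or>
    (CHAR('r) = 4
      \<and> card (derived G (carrier G)) = 2
      \<and> (\<forall>g \<in> carrier G. derived G (carrier G) #>\<^bsub>G\<^esub> \<phi> g = derived G (carrier G) #>\<^bsub>G\<^esub> g)
      \<and> (\<forall>g \<in> carrier G. g \<otimes>\<^bsub>G\<^esub> g \<in> fixed_set G \<phi>)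
      \<and> ((\<exists>r1 \<in> (R2 :: 'r set). \<exists>r2 \<in> R2. r1 * r2 \<noteq> 0) \<longrightarrow>
           (\<forall>a \<in> fixed_set G \<phi>. \<forall>b \<in> fixed_set G \<phi>. a \<otimes>\<^bsub>G\<^esub> b = b \<otimes>\<^bsub>G\<^esub> a)))"
proof -
  interpret group_involution G \<phi>
    using assms(3,5) by (simp add: group_involution_def group_involution_axioms_def)
  have two: "(2::'r) \<noteq> 0" using two_nonzero[OF assms(1)] .
  have three: "(3::'r) \<noteq> 0" using three_nonzero[OF assms(2)] .
  show ?thesis
    unfolding moved_eq skew_commutative_iff_gens skew_gens_commute_iff
    by (intro iffI; elim conjE disjE)
      (rule commutative_skew_cases[OF two three assms(2,4)] abelian_case_commutative
        twisted_case_commutative; assumption)+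
qed

end
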